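(* Let $\alpha,\beta$ be operator space tensor norms (on all normed operator spaces), let $E,F$ be normed operator spaces and $c\ge1$, and suppose $\alpha\le c\beta$ on $E\otimes N$ for cofinally many finite-dimensional subspaces $N\subseteq F$. If $F$ has the completely bounded approximation property with constant $C\ge1$, then $\alpha\le Cc\,\beta$ on $E\otimes F$.
   Context: An operator space tensor norm $\alpha$ assigns to every pair $(E,F)$ of normed operator spaces (not necessarily complete) an operator space structure $\alpha_n(\cdot;E,F)$ on $E\otimes F$, written $E\otimes_\alpha F$, such that the identities $E\otimes_{\mathrm{proj}}F\to E\otimes_\alpha F\to E\otimes_{\min}F$ are complete contractions and $\|S\otimes T:E_1\otimes_\alpha F_1\to E_2\otimes_\alpha F_2\|_{cb}\le\|S\|_{cb}\|T\|_{cb}$ for completely bounded $S,T$ (here $\min$ and $\mathrm{proj}$ are the operator space injective and projective tensor norms). "$\alpha\le c\beta$ on $E\otimes F$" means the identity $E\otimes_\beta F\to E\otimes_\alpha F$ has cb-norm at most $c$. "Cofinally many" means every finite-dimensional subspace of $F$ is contained in one of the subspaces $N$ for which the inequality holds. $F$ has the $C$-completely bounded approximation property if there is a net of finite-rank maps $T_\eta\in CB(F,F)$ with $\|T_\eta\|_{cb}\le C$ and $\|T_\eta x-x\|\to0$ for every $x\in F$. *)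

theory Defs
  imports Complex_Main "HOL-Library.Function_Algebras"
begin

class cvec = ab_group_add +
  fixes cscale :: "complex \<Rightarrow> 'a \<Rightarrow> 'a"
  assumes cscale_add_right: "cscale a (x + y) = cscale a x + cscale a y"
    and cscale_add_left: "cscale (a + b) x = cscale a x + cscale b x"
    and cscale_cscale: "cscale a (cscale b x) = cscale (a * b) x"
    and cscale_one: "cscale 1 x = x"

instantiation complex :: cvec
begin
definition cscale_complex :: "complex \<Rightarrow> complex \<Rightarrow> complex" where
  "cscale_complex a z = a * z"
instance by standard (auto simp: cscale_complex_def algebra_simps)
end

instantiation "fun" :: (type, cvec) cvec
begin
definition cscale_fun :: "complex \<Rightarrow> ('a \<Rightarrow> 'b) \<Rightarrow> 'a \<Rightarrow> 'b" where
  "cscale_fun a f = (\<lambda>x. cscale a (f x))"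
instance by standard (auto simp: fun_eq_iff cscale_fun_def cscale_add_right cscale_add_left cscale_cscale cscale_one)
end

definition csubspace :: "'a::cvec set \<Rightarrow> bool" where
  "csubspace E \<longleftrightarrow> 0 \<in> E \<and> (\<forall>x\<in>E. \<forall>y\<in>E. x + y \<in> E) \<and> (\<forall>c. \<forall>x\<in>E. cscale c x \<in> E)"

definition clinear_on :: "'a::cvec set \<Rightarrow> ('a \<Rightarrow> 'b::cvec) \<Rightarrow> bool" where
  "clinear_on E S \<longleftrightarrow> (\<forall>x\<in>E. \<forall>y\<in>E. S (x + y) = S x + S y) \<and> (\<forall>c. \<forall>x\<in>E. S (cscale c x) = cscale c (S x))"

definition clin :: "('a::cvec \<Rightarrow> complex) \<Rightarrow> bool" where
  "clin f \<longleftrightarrow> clinear_on UNIV f"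

definition cspan :: "'a::cvec set \<Rightarrow> 'a set" where
  "cspan B = {sum (\<lambda>b. cscale (k b) b) B' | k B'. finite B' \<and> B' \<subseteq> B}"

definition fin_dim :: "'a::cvec set \<Rightarrow> bool" where
  "fin_dim N \<longleftrightarrow> (\<exists>B. finite B \<and> N = cspan B)"

definition matrices :: "nat \<Rightarrow> nat \<Rightarrow> 'v::zero set \<Rightarrow> (nat \<Rightarrow> nat \<Rightarrow> 'v) set" where
  "matrices m n V = {X. (\<forall>i j. i < m \<and> j < n \<longrightarrow> X i j \<in> V) \<and> (\<forall>i j. \<not> (i < m \<and> j < n) \<longrightarrow> X i j = 0)}"

definition mnorm :: "nat \<Rightarrow> nat \<Rightarrow> (nat \<Rightarrow> nat \<Rightarrow> complex) \<Rightarrow> real" where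
  "mnorm m n a = Sup {cmod (\<Sum>i<m. \<Sum>j<n. cnj (\<eta> i) * a i j * \<xi> j) | \<xi> \<eta>.
       (\<Sum>j<n. (cmod (\<xi> j))\<^sup>2) \<le> 1 \<and> (\<Sum>i<m. (cmod (\<eta> i))\<^sup>2) \<le> 1}"

definition mmult3 :: "nat \<Rightarrow> nat \<Rightarrow> (nat \<Rightarrow> nat \<Rightarrow> complex) \<Rightarrow> (nat \<Rightarrow> nat \<Rightarrow> 'v::cvec)
    \<Rightarrow> (nat \<Rightarrow> nat \<Rightarrow> complex) \<Rightarrow> nat \<Rightarrow> nat \<Rightarrow> 'v" where
  "mmult3 m k a X b = (\<lambda>i j. if i < m \<and> j < m then
      (\<Sum>r<k. \<Sum>s<k. cscale (a i r * b s j) (X r s)) else 0)"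

definition dsum :: "nat \<Rightarrow> nat \<Rightarrow> (nat \<Rightarrow> nat \<Rightarrow> 'v::zero) \<Rightarrow> (nat \<Rightarrow> nat \<Rightarrow> 'v) \<Rightarrow> nat \<Rightarrow> nat \<Rightarrow> 'v" where
  "dsum m n X Y = (\<lambda>i j. if i < m \<and> j < m then X i j
      else if m \<le> i \<and> i < m + n \<and> m \<le> j \<and> j < m + n then Y (i - m) (j - m) else 0)"

definition zero_mat :: "nat \<Rightarrow> nat \<Rightarrow> 'v::zero" where "zero_mat = (\<lambda>i j. 0)"

definition mat1 :: "'v::zero \<Rightarrow> nat \<Rightarrow> nat \<Rightarrow> 'v" where
  "mat1 v = (\<lambda>i j. if i = 0 \<and> j = 0 then v else 0)"

text \<open>A (normed, not necessarily complete) operator space: a subspace of an ambient complex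
  vector space together with matrix norms nu n on M_n(E) satisfying Ruan's axioms.\<close>
type_synonym 'a opsp = "'a set \<times> (nat \<Rightarrow> (nat \<Rightarrow> nat \<Rightarrow> 'a) \<Rightarrow> real)"

definition opspace :: "'a::cvec opsp \<Rightarrow> bool" where
  "opspace E \<longleftrightarrow> (let V = fst E; \<nu> = snd E in
     csubspace V \<and>
     (\<forall>n. \<forall>X\<in>matrices n n V. \<nu> n X \<ge> 0 \<and> (\<nu> n X = 0 \<longleftrightarrow> X = zero_mat)) \<and>
     (\<forall>n. \<forall>X\<in>matrices n n V. \<forall>Y\<in>matrices n n V. \<nu> n (X + Y) \<le> \<nu> n X + \<nu> n Y) \<and>
     (\<forall>n c. \<forall>X\<in>matrices n n V. \<nu> n (cscale c X) = cmod c * \<nu> n X) \<and>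
     (\<forall>m n. \<forall>X\<in>matrices m m V. \<forall>Y\<in>matrices n n V. \<nu> (m + n) (dsum m n X Y) = max (\<nu> m X) (\<nu> n Y)) \<and>
     (\<forall>m k a b. \<forall>X\<in>matrices k k V. a \<in> matrices m k UNIV \<longrightarrow> b \<in> matrices k m UNIV \<longrightarrow>
        \<nu> m (mmult3 m k a X b) \<le> mnorm m k a * \<nu> k X * mnorm k m b))"

definition restr :: "'a opsp \<Rightarrow> 'a set \<Rightarrow> 'a opsp" where
  "restr F N = (N, snd F)"

definition cb_bounded :: "'a::cvec opsp \<Rightarrow> 'b::cvec opsp \<Rightarrow> ('a \<Rightarrow> 'b) \<Rightarrow> real \<Rightarrow> bool" where
  "cb_bounded E F S K \<longleftrightarrow> clinear_on (fst E) S \<and> S ` fst E \<subseteq> fst F \<and>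
     (\<forall>n. \<forall>X\<in>matrices n n (fst E). snd F n (\<lambda>i j. S (X i j)) \<le> K * snd E n X)"

text \<open>An elementary representation: the tensor sum_i x_i (x) y_i is identified with the
  bilinear form (f,g) |-> sum_i f x_i g y_i on pairs of linear functionals on the ambient
  spaces (this realises the algebraic tensor product, since algebraic duals separate points).\<close>
type_synonym ('a, 'b) tensor = "('a \<Rightarrow> complex) \<times> ('b \<Rightarrow> complex) \<Rightarrow> complex"

definition tsum :: "('a::cvec \<times> 'b::cvec) list \<Rightarrow> ('a, 'b) tensor" where
  "tsum xs = (\<lambda>(f, g). if clin f \<and> clin g then (\<Sum>(x, y)\<leftarrow>xs. f x * g y) else 0)"

definition tens :: "'a::cvec set \<Rightarrow> 'b::cvec set \<Rightarrow> ('a, 'b) tensor set" where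
  "tens E F = {tsum xs | xs. set xs \<subseteq> E \<times> F}"

definition tmap :: "'a::cvec set \<Rightarrow> 'b::cvec set \<Rightarrow> ('a \<Rightarrow> 'c::cvec) \<Rightarrow> ('b \<Rightarrow> 'd::cvec)
    \<Rightarrow> ('a, 'b) tensor \<Rightarrow> ('c, 'd) tensor" where
  "tmap E1 F1 S T u = (SOME v. \<exists>xs. set xs \<subseteq> E1 \<times> F1 \<and> u = tsum xs \<and>
                                 v = tsum (map (\<lambda>(x, y). (S x, T y)) xs))"

type_synonym ('a, 'b) tnorm = "'a opsp \<Rightarrow> 'b opsp \<Rightarrow> nat \<Rightarrow> (nat \<Rightarrow> nat \<Rightarrow> ('a, 'b) tensor) \<Rightarrow> real"

text \<open>Operator space injective (minimal) tensor norm: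
  ||U||_min = sup ||(phi (x) psi)_n (U)||_{M_{npq}} over complete contractions
  phi : E -> M_p, psi : F -> M_q; phi is given by its matrix of (ambient-extended) functionals.
  (phi_n X) has entry phi_{kl}(X_{ij}) at position (i*p+k, j*p+l).\<close>
definition compl_contr_mat :: "'a::cvec opsp \<Rightarrow> nat \<Rightarrow> (nat \<Rightarrow> nat \<Rightarrow> 'a \<Rightarrow> complex) \<Rightarrow> bool" where
  "compl_contr_mat E p \<phi> \<longleftrightarrow> (\<forall>k l. clin (\<phi> k l)) \<and> (\<forall>k l. \<not> (k < p \<and> l < p) \<longrightarrow> \<phi> k l = (\<lambda>_. 0)) \<and>
     (\<forall>n. \<forall>X\<in>matrices n n (fst E).
        mnorm (n * p) (n * p) (\<lambda>r s. if r < n * p \<and> s < n * p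
            then \<phi> (r mod p) (s mod p) (X (r div p) (s div p)) else 0) \<le> snd E n X)"

definition min_norm :: "('a::cvec, 'b::cvec) tnorm" where
  "min_norm E F n U = Sup {mnorm (n * p * q) (n * p * q)
       (\<lambda>r s. if r < n * p * q \<and> s < n * p * q then
          U (r div (p * q)) (s div (p * q))
            (\<phi> ((r div q) mod p) ((s div q) mod p), \<psi> (r mod q) (s mod q)) else 0)
     | p q \<phi> \<psi>. compl_contr_mat E p \<phi> \<and> compl_contr_mat F q \<psi>}"

definition kron :: "nat \<Rightarrow> (nat \<Rightarrow> nat \<Rightarrow> 'a::cvec) \<Rightarrow> (nat \<Rightarrow> nat \<Rightarrow> 'b::cvec) \<Rightarrow> nat \<Rightarrow> nat \<Rightarrow> ('a, 'b) tensor" where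
  "kron q X Y = (\<lambda>r s. tsum [(X (r div q) (s div q), Y (r mod q) (s mod q))])"

definition proj_norm :: "('a::cvec, 'b::cvec) tnorm" where
  "proj_norm E F n U = Inf {mnorm n (p * q) a * snd E p X * snd F q Y * mnorm (p * q) n b
     | p q a b X Y. a \<in> matrices n (p * q) UNIV \<and> b \<in> matrices (p * q) n UNIV \<and>
        X \<in> matrices p p (fst E) \<and> Y \<in> matrices q q (fst F) \<and>
        U = mmult3 n (p * q) a (kron q X Y) b}"

text \<open>Operator space tensor norm (on all operator spaces living in the ambient types 'a, 'b).\<close>
definition os_tensor_norm :: "('a::cvec, 'b::cvec) tnorm \<Rightarrow> bool" where
  "os_tensor_norm \<alpha> \<longleftrightarrow>
    (\<forall>E F. opspace E \<and> opspace F \<longrightarrow>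
       opspace (tens (fst E) (fst F), \<alpha> E F) \<and>
       (\<forall>n. \<forall>U\<in>matrices n n (tens (fst E) (fst F)).
           \<alpha> E F n U \<le> proj_norm E F n U \<and> min_norm E F n U \<le> \<alpha> E F n U)) \<and>
    (\<forall>E1 F1 E2 F2 S T K1 K2. opspace E1 \<and> opspace F1 \<and> opspace E2 \<and> opspace F2 \<and>
       cb_bounded E1 E2 S K1 \<and> cb_bounded F1 F2 T K2 \<longrightarrow>
       cb_bounded (tens (fst E1) (fst F1), \<alpha> E1 F1) (tens (fst E2) (fst F2), \<alpha> E2 F2)
                  (tmap (fst E1) (fst F1) S T) (K1 * K2))"

text \<open>alpha <= c beta on E (x) F: the identity E (x)_beta F -> E (x)_alpha F has cb-norm <= c.\<close>
definition tn_le :: "('a::cvec, 'b::cvec) tnorm \<Rightarrow> ('a, 'b) tnorm \<Rightarrow> 'a opsp \<Rightarrow> 'b opsp \<Rightarrow> real \<Rightarrow> bool" where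
  "tn_le \<alpha> \<beta> E F c \<longleftrightarrow> cb_bounded (tens (fst E) (fst F), \<beta> E F) (tens (fst E) (fst F), \<alpha> E F) id c"

text \<open>C-completely bounded approximation property; nets are represented by (proper) filters.\<close>
definition finite_rank_on :: "'a::cvec set \<Rightarrow> ('a \<Rightarrow> 'a) \<Rightarrow> bool" where
  "finite_rank_on F T \<longleftrightarrow> (\<exists>B. finite B \<and> T ` F \<subseteq> cspan B)"

definition has_cbap :: "'a::cvec opsp \<Rightarrow> real \<Rightarrow> bool" where
  "has_cbap F C \<longleftrightarrow> (\<exists>\<Phi> :: ('a \<Rightarrow> 'a) filter. \<Phi> \<noteq> bot \<and>
     (\<forall>\<^sub>F T in \<Phi>. finite_rank_on (fst F) T \<and> cb_bounded F F T C) \<and>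
     (\<forall>x\<in>fst F. ((\<lambda>T. snd F 1 (mat1 (T x - x))) \<longlongrightarrow> 0) \<Phi>))"

end

theory Submission
  imports Defs
begin

(* Write U \<in> M_n(E \<otimes> F) entrywise as sums of elementary tensors x \<otimes> y.  For a finite-rank
   T from the approximating net, T(F) lies in a finite-dimensional N with \<alpha> \<le> c \<beta> on E \<otimes> N, so
   V = (id \<otimes> T)_n U satisfies
     \<alpha>(V) \<le> \<alpha>_{E \<otimes> N}(V) \<le> c \<beta>_{E \<otimes> N}(V) \<le> C c \<beta>(U),
   by the inclusion N \<subseteq> F, the hypothesis on N and the cb-norm of T : F \<rightarrow> N.  Since \<alpha> is dominated by
   the projective norm, \<alpha>(V - U) is at most the sum of the \<parallel>x\<parallel> \<parallel>T y - y\<parallel>, which tends to 0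
   along the net. *)

section \<open>Complex vector spaces and linear functionals\<close>

interpretation cv: vector_space "cscale :: complex \<Rightarrow> 'a::cvec \<Rightarrow> 'a"
  by unfold_locales (auto simp: cscale_add_right cscale_add_left cscale_cscale cscale_one)

lemma cspan_eq_span: "cspan B = cv.span B"
  unfolding cspan_def cv.span_explicit by blast

lemma csubspace_eq_subspace: "csubspace S = cv.subspace S"
  unfolding csubspace_def cv.subspace_def by blast

lemma cscale_minus_one: "cscale (-1) (x::'a::cvec) = - x"
  by (simp add: cv.scale_minus_left)

lemma csubspace_diff: "csubspace V \<Longrightarrow> x \<in> V \<Longrightarrow> y \<in> V \<Longrightarrow> x - y \<in> V"
  by (simp add: csubspace_eq_subspace cv.subspace_diff)

lemma csubspace_if_fin_dim: "fin_dim N \<Longrightarrow> csubspace N"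
  unfolding fin_dim_def cspan_eq_span csubspace_eq_subspace by auto

lemma fin_dim_if_subset_cspan:
  assumes "csubspace V" "finite B" "V \<subseteq> cspan B"
  shows "fin_dim V"
proof -
  obtain B' where B': "B' \<subseteq> V" "cv.independent B'" "V \<subseteq> cv.span B'"
    using cv.maximal_independent_subset by blast
  have "finite B'"
    using cv.independent_span_bound[OF assms(2) B'(2)] B'(1) assms(3) cspan_eq_span by blast
  moreover have "cv.span B' \<subseteq> V"
    using cv.span_minimal[OF B'(1)] assms(1) csubspace_eq_subspace by blast
  ultimately show ?thesis unfolding fin_dim_def cspan_eq_span using B'(3) by blast
qed

lemma clinear_on_zero:
  assumes "csubspace V" "clinear_on V T"
  shows "T 0 = 0"
proof -
  have "0 \<in> V" using assms(1) unfolding csubspace_def by blast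
  then have "T (0 + 0) = T 0 + T 0" using assms(2) unfolding clinear_on_def by blast
  then show ?thesis by simp
qed

lemma csubspace_image:
  assumes "csubspace V" "clinear_on V T"
  shows "csubspace (T ` V)"
  unfolding csubspace_def
proof (intro conjI ballI allI)
  have "0 \<in> V" using assms(1) unfolding csubspace_def by blast
  then show "0 \<in> T ` V" using clinear_on_zero[OF assms] by force
next
  fix a b assume "a \<in> T ` V" "b \<in> T ` V"
  then obtain x y where "x \<in> V" "y \<in> V" "a = T x" "b = T y" by blast
  moreover have "x + y \<in> V" using assms(1) \<open>x \<in> V\<close> \<open>y \<in> V\<close> unfolding csubspace_def by blast
  ultimately show "a + b \<in> T ` V" using assms(2) unfolding clinear_on_def by (metis image_eqI)
next
  fix c a assume "a \<in> T ` V"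
  then obtain x where "x \<in> V" "a = T x" by blast
  moreover have "cscale c x \<in> V" using assms(1) \<open>x \<in> V\<close> unfolding csubspace_def by blast
  ultimately show "cscale c a \<in> T ` V" using assms(2) unfolding clinear_on_def by (metis image_eqI)
qed

lemma fin_dim_image_if_finite_rank:
  "csubspace V \<Longrightarrow> clinear_on V T \<Longrightarrow> finite_rank_on V T \<Longrightarrow> fin_dim (T ` V)"
  unfolding finite_rank_on_def using csubspace_image fin_dim_if_subset_cspan by blast

lemma clin_add: "clin h \<Longrightarrow> h (x + y) = h x + h y"
  unfolding clin_def clinear_on_def by blast

lemma clin_scale: "clin h \<Longrightarrow> h (cscale c x) = c * h x"
  unfolding clin_def clinear_on_def by (simp add: cscale_complex_def)

lemma clin_zero: "clin h \<Longrightarrow> h 0 = 0"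
  using clin_add[of h 0 0] by simp

lemma clin_diff: "clin h \<Longrightarrow> h (x - y) = h x - h y"
  using clin_add[of h y "x - y"] by simp

lemma clin_separates_points:
  fixes w :: "'a::cvec"
  assumes "w \<noteq> 0"
  obtains h where "clin h" "h w \<noteq> 0"
proof -
  interpret vp: vector_space_pair "cscale :: complex \<Rightarrow> 'a \<Rightarrow> 'a" "cscale :: complex \<Rightarrow> complex \<Rightarrow> complex"
    by unfold_locales
  have "cv.independent {w}"
    using cv.independent_insertI[of w "{}"] assms by (simp add: cv.span_empty)
  then obtain g where g: "Vector_Spaces.linear cscale cscale g" "g w = (1::complex)"
    using vp.linear_independent_extend[of "{w}" "\<lambda>_. 1"] by auto
  have "clin g" unfolding clin_def clinear_on_def
    using g(1) by (simp add: linear_iff_module_hom module_hom.add module_hom.scale)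
  with g(2) show thesis using that by simp
qed

lemma eq_if_clin_eq:
  fixes w w' :: "'a::cvec"
  assumes "\<And>h. clin h \<Longrightarrow> h w = h w'"
  shows "w = w'"
proof (rule ccontr)
  assume "w \<noteq> w'"
  then obtain h where h: "clin h" "h (w - w') \<noteq> 0"
    using clin_separates_points[of "w - w'"] by auto
  then have "h (w - w') = 0" using assms[OF h(1)] clin_diff[OF h(1)] by simp
  with h(2) show False by contradiction
qed

section \<open>Algebraic tensors and the map id \<otimes> T\<close>

lemma tsum_Nil: "tsum [] = 0"
  unfolding tsum_def by (auto simp: fun_eq_iff)

lemma tsum_Cons: "tsum (p # xs) = tsum [p] + tsum xs"
  unfolding tsum_def by (auto simp: fun_eq_iff split: prod.splits)

lemma tsum_in_tens: "set xs \<subseteq> E \<times> F \<Longrightarrow> tsum xs \<in> tens E F"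
  unfolding tens_def by blast

(* slice f xs is (f \<otimes> id) (tsum xs).  By clin_slice it depends only on the tensor tsum xs,
   which is what makes id \<otimes> T well defined on tensors. *)
definition slice :: "('a::cvec \<Rightarrow> complex) \<Rightarrow> ('a \<times> 'b::cvec) list \<Rightarrow> 'b" where
  "slice f xs = (\<Sum>(x, y)\<leftarrow>xs. cscale (f x) y)"

lemma clin_slice: "clin h \<Longrightarrow> h (slice f xs) = (\<Sum>(x, y)\<leftarrow>xs. f x * h y)"
  unfolding slice_def by (induction xs) (auto simp: clin_zero clin_add clin_scale)

lemma slice_in: "csubspace F \<Longrightarrow> set xs \<subseteq> E \<times> F \<Longrightarrow> slice f xs \<in> F"
  unfolding slice_def csubspace_def by (induction xs) auto

lemma slice_map_apsnd:
  assumes "csubspace F" "clinear_on F T" "set xs \<subseteq> E \<times> F"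
  shows "T (slice f xs) = slice f (map (apsnd T) xs)"
  using assms(3)
proof (induction xs)
  case Nil
  then show ?case using clinear_on_zero[OF assms(1,2)] by (simp add: slice_def)
next
  case (Cons p xs)
  obtain x y where p: "p = (x, y)" by force
  have y: "y \<in> F" and xs: "set xs \<subseteq> E \<times> F" using Cons.prems p by auto
  have "cscale (f x) y \<in> F" using assms(1) y unfolding csubspace_def by blast
  then have "T (slice f (p # xs)) = cscale (f x) (T y) + T (slice f xs)"
    using assms(2) slice_in[OF assms(1) xs] y unfolding clinear_on_def by (simp add: slice_def p)
  then show ?case using Cons.IH[OF xs] by (simp add: slice_def p)
qed

lemma tsum_map_apsnd_cong:
  fixes xs ys :: "('a::cvec \<times> 'b::cvec) list" and T :: "'b \<Rightarrow> 'c::cvec"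
  assumes "csubspace F" "clinear_on F T" "set xs \<subseteq> E \<times> F" "set ys \<subseteq> E \<times> F"
    and "tsum xs = tsum ys"
  shows "tsum (map (apsnd T) xs) = tsum (map (apsnd T) ys)"
proof (rule ext, clarify)
  fix f :: "'a \<Rightarrow> complex" and g :: "'c \<Rightarrow> complex"
  show "tsum (map (apsnd T) xs) (f, g) = tsum (map (apsnd T) ys) (f, g)"
  proof (cases "clin f \<and> clin g")
    case True
    have "slice f xs = slice f ys"
    proof (rule eq_if_clin_eq)
      fix h :: "'b \<Rightarrow> complex" assume "clin h"
      then show "h (slice f xs) = h (slice f ys)"
        using True fun_cong[OF assms(5), of "(f, h)"] by (simp add: clin_slice tsum_def)
    qed
    then have "g (slice f (map (apsnd T) xs)) = g (slice f (map (apsnd T) ys))"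
      using slice_map_apsnd[OF assms(1,2)] assms(3,4) by metis
    then show ?thesis using True by (simp add: clin_slice tsum_def)
  qed (auto simp: tsum_def)
qed

lemma tmap_id_left_tsum:
  assumes "csubspace F" "clinear_on F T" "set xs \<subseteq> E \<times> F"
  shows "tmap E F id T (tsum xs) = tsum (map (apsnd T) xs)"
proof -
  have apsnd_eq: "(\<lambda>(x, y). (id x, T y)) = apsnd T" by auto
  show ?thesis
    unfolding tmap_def apsnd_eq
  proof (rule some_equality)
    fix v assume "\<exists>ys. set ys \<subseteq> E \<times> F \<and> tsum xs = tsum ys \<and> v = tsum (map (apsnd T) ys)"
    then show "v = tsum (map (apsnd T) xs)"
      using tsum_map_apsnd_cong[OF assms] by metis
  qed (use assms(3) in blast)
qed

lemma tsum_map_apsnd_diff: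
  "tsum (map (apsnd T) xs) - tsum xs = tsum (map (apsnd (\<lambda>y. T y - y)) xs)"
proof (induction xs)
  case (Cons p xs)
  have head: "tsum [apsnd T p] - tsum [p] = tsum [apsnd (\<lambda>y. T y - y) p]"
    unfolding tsum_def by (auto simp: fun_eq_iff clin_diff right_diff_distrib split: prod.splits)
  have "(tsum [apsnd T p] + tsum (map (apsnd T) xs)) - (tsum [p] + tsum xs)
      = tsum [apsnd (\<lambda>y. T y - y) p] + tsum (map (apsnd (\<lambda>y. T y - y)) xs)"
    by (simp only: add_diff_add head Cons.IH)
  then show ?case by (simp only: list.map tsum_Cons[symmetric])
qed (simp add: tsum_Nil)

section \<open>Matrix norms and operator spaces\<close>

lemma cmod_le_one_if_sum_sq_le_one:
  fixes \<eta> :: "nat \<Rightarrow> complex"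
  assumes "i < m" "(\<Sum>r<m. (cmod (\<eta> r))\<^sup>2) \<le> 1"
  shows "cmod (\<eta> i) \<le> 1"
proof -
  have "(cmod (\<eta> i))\<^sup>2 \<le> (\<Sum>r<m. (cmod (\<eta> r))\<^sup>2)"
    using assms(1) by (intro member_le_sum) auto
  then have "(cmod (\<eta> i))\<^sup>2 \<le> 1" using assms(2) by linarith
  then show ?thesis by (simp add: power_le_one_iff abs_square_le_1)
qed

lemma mnorm_le_if_bounded:
  assumes "\<And>\<xi> \<eta>. (\<Sum>j<n. (cmod (\<xi> j))\<^sup>2) \<le> 1 \<Longrightarrow> (\<Sum>i<m. (cmod (\<eta> i))\<^sup>2) \<le> 1 \<Longrightarrow>
       cmod (\<Sum>i<m. \<Sum>j<n. cnj (\<eta> i) * a i j * \<xi> j) \<le> K"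
  shows "0 \<le> mnorm m n a \<and> mnorm m n a \<le> K"
proof -
  let ?S = "{cmod (\<Sum>i<m. \<Sum>j<n. cnj (\<eta> i) * a i j * \<xi> j) | \<xi> \<eta>.
       (\<Sum>j<n. (cmod (\<xi> j))\<^sup>2) \<le> 1 \<and> (\<Sum>i<m. (cmod (\<eta> i))\<^sup>2) \<le> 1}"
  have "0 \<in> ?S" by (rule CollectI, rule exI[of _ "\<lambda>_. 0"], rule exI[of _ "\<lambda>_. 0"]) simp
  moreover have "\<And>s. s \<in> ?S \<Longrightarrow> s \<le> K" using assms by blast
  ultimately have "0 \<le> Sup ?S \<and> Sup ?S \<le> K"
    by (intro conjI cSup_upper cSup_least bdd_aboveI) auto
  then show ?thesis unfolding mnorm_def by simp
qed

lemma mnorm_nonneg: "0 \<le> mnorm m n a"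
proof -
  have "0 \<le> mnorm m n a \<and> mnorm m n a \<le> (\<Sum>i<m. \<Sum>j<n. cmod (a i j))"
  proof (rule mnorm_le_if_bounded)
    fix \<xi> \<eta> :: "nat \<Rightarrow> complex"
    assume \<xi>: "(\<Sum>j<n. (cmod (\<xi> j))\<^sup>2) \<le> 1" and \<eta>: "(\<Sum>i<m. (cmod (\<eta> i))\<^sup>2) \<le> 1"
    have "cmod (\<Sum>i<m. \<Sum>j<n. cnj (\<eta> i) * a i j * \<xi> j) \<le> (\<Sum>i<m. cmod (\<Sum>j<n. cnj (\<eta> i) * a i j * \<xi> j))"
      by (rule norm_sum)
    also have "\<dots> \<le> (\<Sum>i<m. \<Sum>j<n. cmod (cnj (\<eta> i) * a i j * \<xi> j))"
      by (intro sum_mono norm_sum)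
    also have "\<dots> \<le> (\<Sum>i<m. \<Sum>j<n. cmod (a i j))"
    proof (intro sum_mono)
      fix i j assume "i \<in> {..<m}" "j \<in> {..<n}"
      then have "cmod (\<eta> i) \<le> 1" "cmod (\<xi> j) \<le> 1"
        using cmod_le_one_if_sum_sq_le_one \<xi> \<eta> by auto
      then have "cmod (\<eta> i) * cmod (a i j) * cmod (\<xi> j) \<le> cmod (a i j)"
        by (meson mult_left_le_one_le mult_right_le_one_le norm_ge_zero order_trans zero_le_mult_iff)
      then show "cmod (cnj (\<eta> i) * a i j * \<xi> j) \<le> cmod (a i j)"
        by (simp add: norm_mult)
    qed
    finally show "cmod (\<Sum>i<m. \<Sum>j<n. cnj (\<eta> i) * a i j * \<xi> j) \<le> (\<Sum>i<m. \<Sum>j<n. cmod (a i j))" .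
  qed
  then show ?thesis by simp
qed

lemma mnorm_unit_le_one:
  assumes "i < m" "j < n"
  shows "mnorm m n (\<lambda>r s. if r = i \<and> s = j then 1 else 0) \<le> 1"
proof -
  have "0 \<le> mnorm m n (\<lambda>r s. if r = i \<and> s = j then 1 else 0) \<and>
        mnorm m n (\<lambda>r s. if r = i \<and> s = j then 1 else 0) \<le> 1"
  proof (rule mnorm_le_if_bounded)
    fix \<xi> \<eta> :: "nat \<Rightarrow> complex"
    assume \<xi>: "(\<Sum>j<n. (cmod (\<xi> j))\<^sup>2) \<le> 1" and \<eta>: "(\<Sum>i<m. (cmod (\<eta> i))\<^sup>2) \<le> 1"
    have "(\<Sum>s<n. cnj (\<eta> r) * (if r = i \<and> s = j then 1 else 0) * \<xi> s)
        = (if r = i then cnj (\<eta> i) * \<xi> j else 0)" for r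
      using assms by (simp add: sum.delta if_distrib if_distribR cong: if_cong)
    then have "(\<Sum>r<m. \<Sum>s<n. cnj (\<eta> r) * (if r = i \<and> s = j then 1 else 0) * \<xi> s) = cnj (\<eta> i) * \<xi> j"
      using assms by (simp add: sum.delta)
    moreover have "cmod (\<eta> i) \<le> 1" "cmod (\<xi> j) \<le> 1"
      using cmod_le_one_if_sum_sq_le_one assms \<xi> \<eta> by auto
    ultimately show "cmod (\<Sum>r<m. \<Sum>s<n. cnj (\<eta> r) * (if r = i \<and> s = j then 1 else 0) * \<xi> s) \<le> 1"
      by (simp add: norm_mult mult_le_one)
  qed
  then show ?thesis by simp
qed

lemma opspace_csubspace: "opspace G \<Longrightarrow> csubspace (fst G)"
  unfolding opspace_def Let_def by blast

lemma opspace_norm_nonneg: "opspace G \<Longrightarrow> X \<in> matrices n n (fst G) \<Longrightarrow> 0 \<le> snd G n X"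
  unfolding opspace_def Let_def by blast

lemma opspace_norm_eq_0_iff:
  "opspace G \<Longrightarrow> X \<in> matrices n n (fst G) \<Longrightarrow> snd G n X = 0 \<longleftrightarrow> X = zero_mat"
  unfolding opspace_def Let_def by blast

lemma opspace_norm_triangle:
  "opspace G \<Longrightarrow> X \<in> matrices n n (fst G) \<Longrightarrow> Y \<in> matrices n n (fst G) \<Longrightarrow>
   snd G n (X + Y) \<le> snd G n X + snd G n Y"
  unfolding opspace_def Let_def by blast

lemma opspace_norm_scale:
  "opspace G \<Longrightarrow> X \<in> matrices n n (fst G) \<Longrightarrow> snd G n (cscale c X) = cmod c * snd G n X"
  unfolding opspace_def Let_def by blast

lemma opspace_norm_mmult3:
  "opspace G \<Longrightarrow> X \<in> matrices k k (fst G) \<Longrightarrow> a \<in> matrices m k UNIV \<Longrightarrow> b \<in> matrices k m UNIV \<Longrightarrow>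
   snd G m (mmult3 m k a X b) \<le> mnorm m k a * snd G k X * mnorm k m b"
  unfolding opspace_def Let_def by blast

lemma matrices_mono: "V \<subseteq> W \<Longrightarrow> matrices m n V \<subseteq> matrices m n W"
  unfolding matrices_def by blast

lemma zero_in_matrices: "0 \<in> V \<Longrightarrow> 0 \<in> matrices m n V"
  unfolding matrices_def by simp

lemma matrices_add:
  "csubspace V \<Longrightarrow> X \<in> matrices n n V \<Longrightarrow> Y \<in> matrices n n V \<Longrightarrow> X + Y \<in> matrices n n V"
  unfolding matrices_def csubspace_def by auto

lemma matrices_diff:
  "csubspace V \<Longrightarrow> X \<in> matrices n n V \<Longrightarrow> Y \<in> matrices n n V \<Longrightarrow> X - Y \<in> matrices n n V"
  unfolding matrices_def by (auto intro: csubspace_diff)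

lemma mat1_in_matrices: "x \<in> V \<Longrightarrow> mat1 x \<in> matrices 1 1 V"
  unfolding matrices_def mat1_def by auto

lemma mat1_add: "mat1 (x + y :: 'v::monoid_add) = mat1 x + mat1 y"
  by (auto simp: mat1_def fun_eq_iff)

lemma opspace_norm_zero: "opspace G \<Longrightarrow> snd G n 0 = 0"
  using opspace_norm_eq_0_iff[of G 0 n] zero_in_matrices[of "fst G" n n] opspace_csubspace[of G]
  by (simp add: zero_mat_def fun_eq_iff csubspace_def)

lemma opspace_norm_le_add_diff:
  assumes "opspace G" "X \<in> matrices n n (fst G)" "Y \<in> matrices n n (fst G)"
  shows "snd G n X \<le> snd G n Y + snd G n (Y - X)"
proof -
  have YX: "Y - X \<in> matrices n n (fst G)"
    using matrices_diff[OF opspace_csubspace[OF assms(1)] assms(3,2)] .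
  have XY: "cscale (-1) (Y - X) \<in> matrices n n (fst G)"
    using matrices_diff[OF opspace_csubspace[OF assms(1)] assms(2,3)] by (simp add: cscale_minus_one)
  have X: "Y + cscale (-1) (Y - X) = X" by (simp add: cscale_minus_one)
  have "snd G n X \<le> snd G n Y + snd G n (cscale (-1) (Y - X))"
    using opspace_norm_triangle[OF assms(1,3) XY] by (simp only: X)
  then show ?thesis using opspace_norm_scale[OF assms(1) YX, of "-1"] by simp
qed

lemma sum_matrix_apply: "(sum f I) r s = (\<Sum>p\<in>I. f p r s)"
  by (induction I rule: infinite_finite_induct) auto

lemma opspace_norm_sum:
  assumes "opspace G" "finite I" "\<forall>i\<in>I. f i \<in> matrices n n (fst G)"
  shows "sum f I \<in> matrices n n (fst G) \<and> snd G n (sum f I) \<le> (\<Sum>i\<in>I. snd G n (f i))"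
  using assms(2,3)
proof (induction I rule: finite_induct)
  case empty
  have "0 \<in> fst G" using opspace_csubspace[OF assms(1)] by (simp add: csubspace_def)
  then show ?case
    using zero_in_matrices[of "fst G" n n] opspace_norm_zero[OF assms(1), of n] by (metis order_refl sum.empty)
next
  case (insert i I)
  then have fi: "f i \<in> matrices n n (fst G)"
    and IH: "sum f I \<in> matrices n n (fst G)" "snd G n (sum f I) \<le> (\<Sum>i\<in>I. snd G n (f i))"
    by auto
  show ?case
    unfolding sum.insert[OF insert.hyps]
  proof
    show "f i + sum f I \<in> matrices n n (fst G)"
      using matrices_add[OF opspace_csubspace[OF assms(1)] fi IH(1)] .
    show "snd G n (f i + sum f I) \<le> snd G n (f i) + (\<Sum>i\<in>I. snd G n (f i))"
      using opspace_norm_triangle[OF assms(1) fi IH(1)] IH(2) by linarith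
  qed
qed

lemma opspace_norm_single_entry:
  assumes "opspace G" "i < n" "j < n" "w \<in> fst G"
  shows "snd G n (\<lambda>r s. if r = i \<and> s = j then w else 0) \<le> snd G 1 (mat1 w)"
proof -
  define a :: "nat \<Rightarrow> nat \<Rightarrow> complex" where "a = (\<lambda>r s. if r = i \<and> s = 0 then 1 else 0)"
  define b :: "nat \<Rightarrow> nat \<Rightarrow> complex" where "b = (\<lambda>r s. if r = 0 \<and> s = j then 1 else 0)"
  have a: "a \<in> matrices n 1 UNIV" and b: "b \<in> matrices 1 n UNIV"
    using assms(2,3) by (auto simp: a_def b_def matrices_def)
  (* the single-entry matrix is e_i (mat1 w) e_j^T, so the module axiom applies *)
  have "mmult3 n 1 a (mat1 w) b = (\<lambda>r s. if r = i \<and> s = j then w else 0)"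
    using assms(2,3) by (auto simp: mmult3_def a_def b_def mat1_def fun_eq_iff cscale_one)
  then have "snd G n (\<lambda>r s. if r = i \<and> s = j then w else 0) \<le> mnorm n 1 a * snd G 1 (mat1 w) * mnorm 1 n b"
    using opspace_norm_mmult3[OF assms(1) mat1_in_matrices[OF assms(4)] a b] by simp
  also have "\<dots> \<le> 1 * snd G 1 (mat1 w) * 1"
  proof (intro mult_mono)
    show "mnorm n 1 a \<le> 1" "mnorm 1 n b \<le> 1"
      unfolding a_def b_def using mnorm_unit_le_one assms(2,3) by auto
  qed (use opspace_norm_nonneg[OF assms(1) mat1_in_matrices[OF assms(4)]] mnorm_nonneg in auto)
  finally show ?thesis by simp
qed

lemma opspace_norm_le_sum_entries:
  assumes "opspace G" "W \<in> matrices n n (fst G)"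
  shows "snd G n W \<le> (\<Sum>(i, j)\<in>{..<n} \<times> {..<n}. snd G 1 (mat1 (W i j)))"
proof -
  define f where "f = (\<lambda>(i, j). (\<lambda>r s. if r = i \<and> s = j then W i j else 0))"
  have W_entry: "W i j \<in> fst G" if "(i, j) \<in> {..<n} \<times> {..<n}" for i j
    using assms(2) that by (auto simp: matrices_def)
  have f_mat: "\<forall>p\<in>{..<n} \<times> {..<n}. f p \<in> matrices n n (fst G)"
    using W_entry opspace_csubspace[OF assms(1)] by (auto simp: f_def matrices_def csubspace_def)
  have "W = sum f ({..<n} \<times> {..<n})"
  proof (intro ext)
    fix r s
    have "sum f ({..<n} \<times> {..<n}) r s = (\<Sum>p\<in>{..<n} \<times> {..<n}. if p = (r, s) then W r s else 0)"
      unfolding sum_matrix_apply by (rule sum.cong) (auto simp: f_def split: if_splits)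
    also have "\<dots> = W r s"
      using assms(2) by (auto simp: matrices_def)
    finally show "W r s = sum f ({..<n} \<times> {..<n}) r s" by simp
  qed
  then have "snd G n W \<le> (\<Sum>p\<in>{..<n} \<times> {..<n}. snd G n (f p))"
    using opspace_norm_sum[OF assms(1) _ f_mat] by simp
  also have "\<dots> \<le> (\<Sum>(i, j)\<in>{..<n} \<times> {..<n}. snd G 1 (mat1 (W i j)))"
    unfolding f_def using opspace_norm_single_entry[OF assms(1)] W_entry
    by (intro sum_mono) auto
  finally show ?thesis .
qed

lemma opspace_restr:
  assumes "opspace F" "csubspace N" "N \<subseteq> fst F"
  shows "opspace (restr F N)"
proof -
  have mono: "\<And>m. matrices m m N \<subseteq> matrices m m (fst F)" using matrices_mono[OF assms(3)] by blast
  show ?thesis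
    unfolding opspace_def Let_def restr_def fst_conv snd_conv
  proof (intro conjI allI ballI impI)
    fix n X assume "X \<in> matrices n n N"
    then have X: "X \<in> matrices n n (fst F)" using mono by blast
    show "0 \<le> snd F n X" using opspace_norm_nonneg[OF assms(1) X] .
    show "(snd F n X = 0) = (X = zero_mat)" using opspace_norm_eq_0_iff[OF assms(1) X] .
    show "\<And>c. snd F n (cscale c X) = cmod c * snd F n X" using opspace_norm_scale[OF assms(1) X] .
  next
    fix n X Y assume "X \<in> matrices n n N" "Y \<in> matrices n n N"
    then show "snd F n (X + Y) \<le> snd F n X + snd F n Y"
      using opspace_norm_triangle[OF assms(1)] mono by blast
  next
    fix m n X Y assume "X \<in> matrices m m N" "Y \<in> matrices n n N"
    then show "snd F (m + n) (dsum m n X Y) = max (snd F m X) (snd F n Y)"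
      using assms(1) mono unfolding opspace_def Let_def by blast
  next
    fix m k and a b :: "nat \<Rightarrow> nat \<Rightarrow> complex" and X
    assume "X \<in> matrices k k N" "a \<in> matrices m k UNIV" "b \<in> matrices k m UNIV"
    then show "snd F m (mmult3 m k a X b) \<le> mnorm m k a * snd F k X * mnorm k m b"
      using opspace_norm_mmult3[OF assms(1)] mono by blast
  qed (use assms(2) in simp)
qed

lemma cb_bounded_id: "cb_bounded E E id 1"
  unfolding cb_bounded_def clinear_on_def by simp

lemma cb_bounded_inclusion: "N \<subseteq> fst F \<Longrightarrow> cb_bounded (restr F N) F id 1"
  unfolding cb_bounded_def clinear_on_def restr_def by auto

lemma cb_bounded_restr_range: "cb_bounded F G T C \<Longrightarrow> T ` fst F \<subseteq> N \<Longrightarrow> cb_bounded F (restr G N) T C"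
  unfolding cb_bounded_def restr_def by auto

section \<open>Operator space tensor norms\<close>

lemma os_tensor_norm_opspace:
  "os_tensor_norm \<alpha> \<Longrightarrow> opspace E \<Longrightarrow> opspace F \<Longrightarrow> opspace (tens (fst E) (fst F), \<alpha> E F)"
  unfolding os_tensor_norm_def by blast

lemma os_tensor_norm_le_proj_norm:
  "os_tensor_norm \<alpha> \<Longrightarrow> opspace E \<Longrightarrow> opspace F \<Longrightarrow> U \<in> matrices n n (tens (fst E) (fst F)) \<Longrightarrow>
   \<alpha> E F n U \<le> proj_norm E F n U"
  unfolding os_tensor_norm_def by blast

lemma os_tensor_norm_cb_bounded:
  "os_tensor_norm \<alpha> \<Longrightarrow> opspace E1 \<Longrightarrow> opspace F1 \<Longrightarrow> opspace E2 \<Longrightarrow> opspace F2 \<Longrightarrow>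
   cb_bounded E1 E2 S K1 \<Longrightarrow> cb_bounded F1 F2 T K2 \<Longrightarrow>
   cb_bounded (tens (fst E1) (fst F1), \<alpha> E1 F1) (tens (fst E2) (fst F2), \<alpha> E2 F2)
     (tmap (fst E1) (fst F1) S T) (K1 * K2)"
  unfolding os_tensor_norm_def by blast

lemma os_tensor_norm_elementary_le:
  assumes "os_tensor_norm \<alpha>" "opspace E" "opspace F" "x \<in> fst E" "y \<in> fst F"
  shows "\<alpha> E F 1 (mat1 (tsum [(x, y)])) \<le> snd E 1 (mat1 x) * snd F 1 (mat1 y)"
proof -
  let ?S = "{mnorm 1 (p * q) a * snd E p X * snd F q Y * mnorm (p * q) 1 b
     | p q a b X Y. a \<in> matrices 1 (p * q) UNIV \<and> b \<in> matrices (p * q) 1 UNIV \<and>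
        X \<in> matrices p p (fst E) \<and> Y \<in> matrices q q (fst F) \<and>
        mat1 (tsum [(x, y)]) = mmult3 1 (p * q) a (kron q X Y) b}"
  let ?one = "mat1 1 :: nat \<Rightarrow> nat \<Rightarrow> complex"
  have one_le: "mnorm 1 1 ?one \<le> 1"
    using mnorm_unit_le_one[of 0 1 0 1] by (simp add: mat1_def)
  (* x \<otimes> y = 1 (x \<otimes> y) 1 is one of the factorizations in the infimum defining proj_norm *)
  have "mat1 (tsum [(x, y)]) = mmult3 1 (1 * 1) ?one (kron 1 (mat1 x) (mat1 y)) ?one"
    by (auto simp: mmult3_def mat1_def kron_def fun_eq_iff cscale_one)
  then have witness: "mnorm 1 1 ?one * snd E 1 (mat1 x) * snd F 1 (mat1 y) * mnorm 1 1 ?one \<in> ?S"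
    using mat1_in_matrices[of 1 UNIV] mat1_in_matrices[OF assms(4)] mat1_in_matrices[OF assms(5)]
    by (intro CollectI exI[of _ 1] exI[of _ ?one] exI[of _ "mat1 x"] exI[of _ "mat1 y"]) simp
  have "bdd_below ?S"
    using opspace_norm_nonneg[OF assms(2)] opspace_norm_nonneg[OF assms(3)] mnorm_nonneg
    by (intro bdd_belowI[of _ 0]) (auto intro!: mult_nonneg_nonneg)
  then have "proj_norm E F 1 (mat1 (tsum [(x, y)]))
      \<le> mnorm 1 1 ?one * snd E 1 (mat1 x) * snd F 1 (mat1 y) * mnorm 1 1 ?one"
    unfolding proj_norm_def using cInf_lower[OF witness] by simp
  also have "\<dots> \<le> 1 * snd E 1 (mat1 x) * snd F 1 (mat1 y) * 1"
    using one_le opspace_norm_nonneg[OF assms(2) mat1_in_matrices[OF assms(4)]]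
      opspace_norm_nonneg[OF assms(3) mat1_in_matrices[OF assms(5)]] mnorm_nonneg
    by (intro mult_mono) auto
  finally show ?thesis
    using os_tensor_norm_le_proj_norm[OF assms(1-3) mat1_in_matrices] tsum_in_tens[of "[(x, y)]"] assms(4,5)
    by fastforce
qed

lemma os_tensor_norm_tsum_le:
  assumes "os_tensor_norm \<alpha>" "opspace E" "opspace F" "set ws \<subseteq> fst E \<times> fst F"
  shows "\<alpha> E F 1 (mat1 (tsum ws)) \<le> (\<Sum>(x, y)\<leftarrow>ws. snd E 1 (mat1 x) * snd F 1 (mat1 y))"
  using assms(4)
proof (induction ws)
  case Nil
  have "\<alpha> E F 1 (mat1 (tsum [])) = \<alpha> E F 1 0"
    by (rule arg_cong[where f = "\<alpha> E F 1"]) (simp add: tsum_Nil mat1_def fun_eq_iff)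
  then show ?case using opspace_norm_zero[OF os_tensor_norm_opspace[OF assms(1-3)], of 1] by simp
next
  case (Cons p ws)
  obtain x y where p: "p = (x, y)" by force
  have xy: "x \<in> fst E" "y \<in> fst F" and ws: "set ws \<subseteq> fst E \<times> fst F" using Cons.prems p by auto
  have "mat1 (tsum [(x, y)]) \<in> matrices 1 1 (tens (fst E) (fst F))"
    "mat1 (tsum ws) \<in> matrices 1 1 (tens (fst E) (fst F))"
    using xy ws by (auto simp del: One_nat_def intro!: mat1_in_matrices tsum_in_tens)
  then have "\<alpha> E F 1 (mat1 (tsum [(x, y)]) + mat1 (tsum ws))
      \<le> \<alpha> E F 1 (mat1 (tsum [(x, y)])) + \<alpha> E F 1 (mat1 (tsum ws))"
    using opspace_norm_triangle[OF os_tensor_norm_opspace[OF assms(1-3)]] by simp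
  then have "\<alpha> E F 1 (mat1 (tsum (p # ws))) \<le> \<alpha> E F 1 (mat1 (tsum [(x, y)])) + \<alpha> E F 1 (mat1 (tsum ws))"
    by (simp only: p tsum_Cons[of "(x, y)" ws] mat1_add)
  then show ?case using os_tensor_norm_elementary_le[OF assms(1-3) xy] Cons.IH[OF ws] p by simp
qed

lemma matrices_tsum:
  assumes "\<forall>i j. set (xs i j) \<subseteq> E \<times> F" "\<forall>i j. \<not> (i < n \<and> j < n) \<longrightarrow> xs i j = []"
  shows "(\<lambda>i j. tsum (xs i j)) \<in> matrices n n (tens E F)"
  using assms by (auto simp: matrices_def tsum_Nil intro!: tsum_in_tens)

lemma matrices_tens_obtain_rep:
  assumes "U \<in> matrices n n (tens E F)"
  obtains xs where "\<forall>i j. set (xs i j) \<subseteq> E \<times> F" "\<forall>i j. \<not> (i < n \<and> j < n) \<longrightarrow> xs i j = []"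
    and "U = (\<lambda>i j. tsum (xs i j))"
proof -
  have "\<exists>ws. set ws \<subseteq> E \<times> F \<and> (\<not> (i < n \<and> j < n) \<longrightarrow> ws = []) \<and> U i j = tsum ws" for i j
  proof (cases "i < n \<and> j < n")
    case True
    then have "U i j \<in> tens E F" using assms by (auto simp: matrices_def)
    then show ?thesis using True unfolding tens_def by blast
  next
    case False
    then show ?thesis using assms by (auto simp: matrices_def tsum_Nil)
  qed
  then obtain xs where xs: "\<forall>i j. set (xs i j) \<subseteq> E \<times> F \<and> (\<not> (i < n \<and> j < n) \<longrightarrow> xs i j = [])
      \<and> U i j = tsum (xs i j)"
    by metis
  have "U = (\<lambda>i j. tsum (xs i j))"
    using xs by (intro ext) (simp only:)
  with xs show thesis using that by blast
qed

definition rep_norm_sum :: "'a::zero opsp \<Rightarrow> 'b::zero opsp \<Rightarrow> nat \<Rightarrow> (nat \<Rightarrow> nat \<Rightarrow> ('a \<times> 'b) list) \<Rightarrow> real" where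
  "rep_norm_sum E F n xs =
     (\<Sum>(i, j)\<in>{..<n} \<times> {..<n}. \<Sum>(x, y)\<leftarrow>xs i j. snd E 1 (mat1 x) * snd F 1 (mat1 y))"

lemma os_tensor_norm_le_rep_norm_sum:
  assumes "os_tensor_norm \<alpha>" "opspace E" "opspace F"
    and "\<forall>i j. set (xs i j) \<subseteq> fst E \<times> fst F" "\<forall>i j. \<not> (i < n \<and> j < n) \<longrightarrow> xs i j = []"
  shows "\<alpha> E F n (\<lambda>i j. tsum (xs i j)) \<le> rep_norm_sum E F n xs"
proof -
  have "\<alpha> E F n (\<lambda>i j. tsum (xs i j)) \<le> (\<Sum>(i, j)\<in>{..<n} \<times> {..<n}. \<alpha> E F 1 (mat1 (tsum (xs i j))))"
    using opspace_norm_le_sum_entries[OF os_tensor_norm_opspace[OF assms(1-3)]] matrices_tsum[OF assms(4,5)]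
    by simp
  also have "\<dots> \<le> rep_norm_sum E F n xs"
    unfolding rep_norm_sum_def using os_tensor_norm_tsum_le[OF assms(1-3)] assms(4) by (intro sum_mono) auto
  finally show ?thesis .
qed

lemma os_tensor_norm_tmap_id_left_le:
  assumes "os_tensor_norm \<alpha>" "opspace E" "opspace F" "opspace G" "cb_bounded F G T C"
    and "U \<in> matrices n n (tens (fst E) (fst F))"
  shows "\<alpha> E G n (\<lambda>i j. tmap (fst E) (fst F) id T (U i j)) \<le> C * \<alpha> E F n U"
  using os_tensor_norm_cb_bounded[OF assms(1-3) assms(2,4) cb_bounded_id assms(5)] assms(6)
  unfolding cb_bounded_def by simp

lemma os_tensor_norm_le_restr:
  assumes "os_tensor_norm \<alpha>" "opspace E" "opspace F" "csubspace N" "N \<subseteq> fst F"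
    and "\<forall>i j. set (xs i j) \<subseteq> fst E \<times> N" "\<forall>i j. \<not> (i < n \<and> j < n) \<longrightarrow> xs i j = []"
  shows "\<alpha> E F n (\<lambda>i j. tsum (xs i j)) \<le> \<alpha> E (restr F N) n (\<lambda>i j. tsum (xs i j))"
proof -
  have "tmap (fst E) N id id (tsum (xs i j)) = tsum (xs i j)" for i j
    using tmap_id_left_tsum[OF assms(4), of id "xs i j" "fst E"] assms(6) by (simp add: clinear_on_def)
  moreover have "\<alpha> E F n (\<lambda>i j. tmap (fst E) N id id (tsum (xs i j))) \<le> \<alpha> E (restr F N) n (\<lambda>i j. tsum (xs i j))"
    using os_tensor_norm_tmap_id_left_le[OF assms(1,2) opspace_restr[OF assms(3,4,5)] assms(3)
        cb_bounded_inclusion[OF assms(5)], where U = "\<lambda>i j. tsum (xs i j)"] matrices_tsum[OF assms(6,7)]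
    by (simp add: restr_def)
  ultimately show ?thesis by simp
qed

lemma set_map_apsnd_subset: "set ws \<subseteq> A \<times> B \<Longrightarrow> h ` B \<subseteq> C \<Longrightarrow> set (map (apsnd h) ws) \<subseteq> A \<times> C"
  by force

lemma os_tensor_norm_le_finite_rank_approx:
  assumes "os_tensor_norm \<alpha>" "os_tensor_norm \<beta>" "opspace E" "opspace F" "0 \<le> c"
    and N: "csubspace N" "N \<subseteq> fst F" "tn_le \<alpha> \<beta> E (restr F N) c"
    and T: "cb_bounded F F T C" "T ` fst F \<subseteq> N"
    and xs: "\<forall>i j. set (xs i j) \<subseteq> fst E \<times> fst F" "\<forall>i j. \<not> (i < n \<and> j < n) \<longrightarrow> xs i j = []"
  defines "U \<equiv> \<lambda>i j. tsum (xs i j)"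
  shows "\<alpha> E F n U \<le> C * c * \<beta> E F n U + rep_norm_sum E F n (\<lambda>i j. map (apsnd (\<lambda>y. T y - y)) (xs i j))"
proof -
  define V where "V = (\<lambda>i j. tsum (map (apsnd T) (xs i j)))"
  define D where "D = (\<lambda>i j. map (apsnd (\<lambda>y. T y - y)) (xs i j))"
  have sF: "csubspace (fst F)" using opspace_csubspace[OF assms(4)] .
  have linT: "clinear_on (fst F) T" and TF: "T ` fst F \<subseteq> fst F"
    using T(1) unfolding cb_bounded_def by auto
  have osA: "opspace (tens (fst E) (fst F), \<alpha> E F)" using os_tensor_norm_opspace[OF assms(1,3,4)] .
  have U: "U \<in> matrices n n (tens (fst E) (fst F))" unfolding U_def using matrices_tsum[OF xs] .
  have TF_diff: "(\<lambda>y. T y - y) ` fst F \<subseteq> fst F" using TF csubspace_diff[OF sF] by blast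
  have D: "\<forall>i j. set (D i j) \<subseteq> fst E \<times> fst F" "\<forall>i j. \<not> (i < n \<and> j < n) \<longrightarrow> D i j = []"
    unfolding D_def using set_map_apsnd_subset[OF xs(1)[rule_format] TF_diff] xs(2) by simp_all
  have TN: "\<forall>i j. set (map (apsnd T) (xs i j)) \<subseteq> fst E \<times> N"
    "\<forall>i j. \<not> (i < n \<and> j < n) \<longrightarrow> map (apsnd T) (xs i j) = []"
    using set_map_apsnd_subset[OF xs(1)[rule_format] T(2)] xs(2) by simp_all
  have "\<forall>i j. set (map (apsnd T) (xs i j)) \<subseteq> fst E \<times> fst F"
    using set_map_apsnd_subset[OF xs(1)[rule_format] TF] by simp
  then have V: "V \<in> matrices n n (tens (fst E) (fst F))"
    unfolding V_def using TN(2) by (rule matrices_tsum)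
  have "\<alpha> E F n V \<le> \<alpha> E (restr F N) n V"
    unfolding V_def by (rule os_tensor_norm_le_restr[OF assms(1,3,4) N(1,2) TN])
  also have "\<dots> \<le> c * \<beta> E (restr F N) n V"
    using N(3) matrices_tsum[OF TN] unfolding tn_le_def cb_bounded_def V_def by (simp add: restr_def)
  also have "\<dots> \<le> c * (C * \<beta> E F n U)"
  proof (rule mult_left_mono[OF _ assms(5)])
    have "V = (\<lambda>i j. tmap (fst E) (fst F) id T (U i j))"
      unfolding V_def U_def by (simp add: tmap_id_left_tsum[OF sF linT xs(1)[rule_format]])
    then show "\<beta> E (restr F N) n V \<le> C * \<beta> E F n U"
      using os_tensor_norm_tmap_id_left_le[OF assms(2,3,4) opspace_restr[OF assms(4) N(1,2)]
          cb_bounded_restr_range[OF T] U] by simp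
  qed
  finally have "\<alpha> E F n V \<le> C * c * \<beta> E F n U" by (simp add: mult_ac)
  moreover have "\<alpha> E F n U \<le> \<alpha> E F n V + \<alpha> E F n (V - U)"
    using opspace_norm_le_add_diff[OF osA] U V by simp
  moreover have "V - U = (\<lambda>i j. tsum (D i j))"
  proof (rule ext, rule ext)
    fix i j
    show "(V - U) i j = tsum (D i j)"
      unfolding V_def U_def D_def using tsum_map_apsnd_diff by (simp only: minus_apply)
  qed
  then have "\<alpha> E F n (V - U) \<le> rep_norm_sum E F n D"
    using os_tensor_norm_le_rep_norm_sum[OF assms(1,3,4) D] by simp
  ultimately show ?thesis unfolding D_def by linarith
qed

lemma tendsto_sum_list_zero:
  assumes "\<And>p. p \<in> set ws \<Longrightarrow> ((\<lambda>t. g t p) \<longlongrightarrow> 0) F"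
  shows "((\<lambda>t. \<Sum>p\<leftarrow>ws. g t p) \<longlongrightarrow> (0::real)) F"
  using assms by (induction ws) (auto intro: tendsto_add_zero)

lemma rep_norm_sum_tendsto_zero:
  assumes "\<forall>y\<in>fst F. ((\<lambda>T. snd F 1 (mat1 (T y - y))) \<longlongrightarrow> 0) \<Phi>"
    and "\<forall>i j. set (xs i j) \<subseteq> fst E \<times> fst F"
  shows "((\<lambda>T. rep_norm_sum E F n (\<lambda>i j. map (apsnd (\<lambda>y. T y - y)) (xs i j))) \<longlongrightarrow> 0) \<Phi>"
  unfolding rep_norm_sum_def
proof (rule tendsto_null_sum, clarify)
  fix i j
  have "((\<lambda>T. \<Sum>(x, y)\<leftarrow>xs i j. snd E 1 (mat1 x) * snd F 1 (mat1 (T y - y))) \<longlongrightarrow> 0) \<Phi>"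
  proof (rule tendsto_sum_list_zero, clarify)
    fix x y assume "(x, y) \<in> set (xs i j)"
    then have "((\<lambda>T. snd F 1 (mat1 (T y - y))) \<longlongrightarrow> 0) \<Phi>" using assms by blast
    then show "((\<lambda>T. snd E 1 (mat1 x) * snd F 1 (mat1 (T y - y))) \<longlongrightarrow> 0) \<Phi>"
      by (rule tendsto_mult_right_zero)
  qed
  then show "((\<lambda>T. \<Sum>(x, y)\<leftarrow>map (apsnd (\<lambda>y. T y - y)) (xs i j). snd E 1 (mat1 x) * snd F 1 (mat1 y))
      \<longlongrightarrow> 0) \<Phi>"
    by (simp add: comp_def case_prod_unfold)
qed

lemma os_tensor_norm_le_via_cbap_net:
  fixes \<Phi> :: "('b::cvec \<Rightarrow> 'b) filter"
  assumes "os_tensor_norm \<alpha>" "os_tensor_norm \<beta>" "opspace E" "opspace F" "0 \<le> c"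
    and cofinal: "\<forall>M. fin_dim M \<and> M \<subseteq> fst F \<longrightarrow>
           (\<exists>N. fin_dim N \<and> M \<subseteq> N \<and> N \<subseteq> fst F \<and> tn_le \<alpha> \<beta> E (restr F N) c)"
    and \<Phi>: "\<Phi> \<noteq> bot" "\<forall>\<^sub>F T in \<Phi>. finite_rank_on (fst F) T \<and> cb_bounded F F T C"
      "\<forall>y\<in>fst F. ((\<lambda>T. snd F 1 (mat1 (T y - y))) \<longlongrightarrow> 0) \<Phi>"
    and U_mat: "U \<in> matrices n n (tens (fst E) (fst F))"
  shows "\<alpha> E F n U \<le> C * c * \<beta> E F n U"
proof -
  obtain xs where xs: "\<forall>i j. set (xs i j) \<subseteq> fst E \<times> fst F"
    "\<forall>i j. \<not> (i < n \<and> j < n) \<longrightarrow> xs i j = []" and U: "U = (\<lambda>i j. tsum (xs i j))"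
    using matrices_tens_obtain_rep[OF U_mat] by blast
  let ?err = "\<lambda>T. rep_norm_sum E F n (\<lambda>i j. map (apsnd (\<lambda>y. T y - y)) (xs i j))"
  have ev: "\<forall>\<^sub>F T in \<Phi>. \<alpha> E F n U \<le> C * c * \<beta> E F n U + ?err T"
    using \<Phi>(2)
  proof (rule eventually_mono, elim conjE)
    fix T assume "finite_rank_on (fst F) T" "cb_bounded F F T C"
    moreover have "csubspace (fst F)" using opspace_csubspace[OF assms(4)] .
    ultimately have "fin_dim (T ` fst F)" "T ` fst F \<subseteq> fst F"
      using fin_dim_image_if_finite_rank unfolding cb_bounded_def by blast+
    then obtain N where N: "fin_dim N" "T ` fst F \<subseteq> N" "N \<subseteq> fst F" "tn_le \<alpha> \<beta> E (restr F N) c"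
      using cofinal by blast
    show "\<alpha> E F n U \<le> C * c * \<beta> E F n U + ?err T"
      unfolding U using os_tensor_norm_le_finite_rank_approx[OF assms(1-5) csubspace_if_fin_dim[OF N(1)]
          N(3,4) \<open>cb_bounded F F T C\<close> N(2) xs] .
  qed
  have "(?err \<longlongrightarrow> 0) \<Phi>" using rep_norm_sum_tendsto_zero[OF \<Phi>(3) xs(1)] .
  then have "\<alpha> E F n U \<le> C * c * \<beta> E F n U + 0"
    using tendsto_le[OF _ tendsto_add[OF tendsto_const] tendsto_const ev] \<Phi>(1) by blast
  then show ?thesis by simp
qed

theorem lemma4p1:
  fixes \<alpha> \<beta> :: "('a::cvec, 'b::cvec) tnorm"
    and E :: "'a opsp" and F :: "'b opsp"
    and c C :: real
  assumes "os_tensor_norm \<alpha>" and "os_tensor_norm \<beta>"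
    and "opspace E" and "opspace F"
    and "c \<ge> 1"
    and "\<forall>M. fin_dim M \<and> M \<subseteq> fst F \<longrightarrow>
           (\<exists>N. fin_dim N \<and> M \<subseteq> N \<and> N \<subseteq> fst F \<and> tn_le \<alpha> \<beta> E (restr F N) c)"
    and "C \<ge> 1" and "has_cbap F C"
  shows "tn_le \<alpha> \<beta> E F (C * c)"
proof -
  obtain \<Phi> :: "('b \<Rightarrow> 'b) filter" where \<Phi>: "\<Phi> \<noteq> bot"
    "\<forall>\<^sub>F T in \<Phi>. finite_rank_on (fst F) T \<and> cb_bounded F F T C"
    "\<forall>y\<in>fst F. ((\<lambda>T. snd F 1 (mat1 (T y - y))) \<longlongrightarrow> 0) \<Phi>"
    using assms(8) unfolding has_cbap_def by blast
  have "0 \<le> c" using assms(5) by simp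
  then have "\<alpha> E F n U \<le> C * c * \<beta> E F n U" if "U \<in> matrices n n (tens (fst E) (fst F))" for n U
    using os_tensor_norm_le_via_cbap_net[OF assms(1-4) _ assms(6) \<Phi>] that by blast
  then show ?thesis unfolding tn_le_def cb_bounded_def clinear_on_def by auto
qed

end
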